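(* Let $q\ge1$ and $k\ge2$ be integers, and for $1\le t\le q$ let $\boldsymbol{\alpha}_t=(\alpha_{t,1},\dots,\alpha_{t,k})$ with $0<\alpha_{t,1},\dots,\alpha_{t,k}<1$ and $\alpha_{t,1}+\cdots+\alpha_{t,k}=1$. There exist constants $C,N$ depending only on $k$, $q$ and $(\boldsymbol\alpha_t)_{1\le t\le q}$ such that the following holds. For all integers $n\ge N$, $d\ge1$, all $g_1,\dots,g_{k-1}\in\mathbb{Z}$ and all integers $0\le i_1,\dots,i_q\le n$ with $i_1+\cdots+i_q=n$, $$\Bigg|\sum\prod_{t=1}^q P_{i_t,\mathbf{s}_t,\boldsymbol{\alpha}_t}-\frac{1}{d^{k-1}}\Bigg|\le C\,\frac{\log n}{\sqrt n},$$ where the sum is over all integer vectors $\mathbf{s}_t=(s_{t,1},\dots,s_{t,k})$, $1\le t\le q$, with $0\le s_{t,1},\dots,s_{t,k}\le i_t$, $s_{t,1}+\cdots+s_{t,k}=i_t$ for every $t$, and $s^{(a)}\equiv g_a\pmod d$ for $a=1,\dots,k-1$, with $s^{(a)}:=s_{1,a}+\cdots+s_{q,a}$.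
   Context: For nonnegative integers $n,u_1,\dots,u_k$ with $u_1+\cdots+u_k=n$, $\mathbf{u}=(u_1,\dots,u_k)$ and $\boldsymbol\alpha=(\alpha_1,\dots,\alpha_k)$, $P_{n,\mathbf{u},\boldsymbol\alpha}:=\frac{n!}{u_1!\cdots u_k!}\alpha_1^{u_1}\cdots\alpha_k^{u_k}$ (the multinomial coefficient being $1$ when $n=0$). *)

theory Defs
  imports Complex_Main "HOL-Number_Theory.Cong"
begin

text \<open>Multinomial probability P_{n,u,alpha} for a vector u = (u 0, ..., u (k-1))
  and alpha = (alpha 0, ..., alpha (k-1)) (indices shifted to start at 0).\<close>
definition multP :: "nat \<Rightarrow> nat \<Rightarrow> (nat \<Rightarrow> nat) \<Rightarrow> (nat \<Rightarrow> real) \<Rightarrow> real" where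
  "multP k n u \<alpha> = fact n / (\<Prod>a<k. fact (u a)) * (\<Prod>a<k. \<alpha> a ^ u a)"

text \<open>Families s_t = (s t 0, ..., s t (k-1)), t < q, of nonnegative integer vectors with
  s t 0 + ... + s t (k-1) = i t; entries outside the index range are fixed to 0
  (so the set is finite and each family is represented exactly once).\<close>
definition comp_families :: "nat \<Rightarrow> nat \<Rightarrow> (nat \<Rightarrow> nat) \<Rightarrow> (nat \<Rightarrow> nat \<Rightarrow> nat) set" where
  "comp_families q k i = {s. (\<forall>t a. \<not> (t < q \<and> a < k) \<longrightarrow> s t a = 0) \<and>
                             (\<forall>t<q. (\<Sum>a<k. s t a) = i t)}"

end

theory Submission
  imports Defs "HOL-Probability.Product_PMF"
begin

text \<open>
  The congruence conditions are detected by additive characters: with \<open>K = k - 1\<close>, the restricted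
  sum equals \<open>d\<^sup>-\<^sup>K\<close> times the sum over frequency vectors \<open>r \<in> {0..d-1}\<^sup>K\<close> of
  \<open>e(-r\<cdot>g/d) \<Prod>\<^sub>t \<phi>\<^sub>t(r)\<^bsup>i\<^sub>t\<^esup>\<close>, where \<open>\<phi>\<^sub>t(r) = \<Sum>\<^sub>a \<alpha>\<^sub>t\<^sub>,\<^sub>a e(r\<^sub>a/d)\<close> (with \<open>r\<^sub>K = 0\<close>) comes from the multinomial
  theorem. The frequency \<open>r = 0\<close> contributes exactly \<open>d\<^sup>-\<^sup>K\<close>. For the others, comparing each
  coordinate \<open>a < K\<close> with the last one gives
  \<open>|\<phi>\<^sub>t(r)| \<le> exp (-\<gamma> \<Sum>\<^sub>a (1 - cos (2\<pi> r\<^sub>a/d)))\<close>, \<open>\<gamma> = m\<^sup>2/K\<close>, \<open>m\<close> the least \<open>\<alpha>\<^sub>t\<^sub>,\<^sub>a\<close>. Since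
  \<open>\<Sum>\<^sub>t i\<^sub>t = n\<close>, the error is at most \<open>d\<^sup>-\<^sup>K ((\<Sum>\<^sub>j h j)\<^sup>K - 1)\<close> with
  \<open>h j = exp (-\<gamma> n (1 - cos (2\<pi> j/d)))\<close>, and the Gaussian-type estimate
  \<open>\<Sum>\<^sub>j h j \<le> 1 + O(d/\<surd>n)\<close> bounds it by \<open>O(1/\<surd>n)\<close>, uniformly in \<open>d\<close> and \<open>g\<close>.
\<close>

lemma prod_sum_PiE_dflt:
  fixes f :: "'a \<Rightarrow> 'b \<Rightarrow> 'c::comm_semiring_1"
  assumes "finite A" and "\<And>x. x \<in> A \<Longrightarrow> finite (B x)"
  shows "(\<Prod>x\<in>A. \<Sum>y\<in>B x. f x y) = (\<Sum>g\<in>PiE_dflt A dflt B. \<Prod>x\<in>A. f x (g x))"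
proof -
  have "inj_on (\<lambda>g. restrict g A) (PiE_dflt A dflt B)"
  proof (rule inj_onI, rule ext)
    fix g h x assume "g \<in> PiE_dflt A dflt B" "h \<in> PiE_dflt A dflt B" "restrict g A = restrict h A"
    then show "g x = h x"
      by (cases "x \<in> A") (auto simp: PiE_dflt_def dest: fun_cong[of _ _ x])
  qed
  have "(\<Prod>x\<in>A. \<Sum>y\<in>B x. f x y) = (\<Sum>g\<in>(\<lambda>g. restrict g A) ` PiE_dflt A dflt B. \<Prod>x\<in>A. f x (g x))"
    by (simp only: prod_sum_PiE[OF assms] restrict_PiE_dflt)
  also have "\<dots> = (\<Sum>g\<in>PiE_dflt A dflt B. \<Prod>x\<in>A. f x (restrict g A x))"
    by (rule sum.reindex[OF \<open>inj_on _ _\<close>, unfolded comp_def])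
  finally show ?thesis
    by simp
qed

definition weak_compositions :: "nat \<Rightarrow> nat \<Rightarrow> (nat \<Rightarrow> nat) set" where
  "weak_compositions k m = {u. (\<forall>a\<ge>k. u a = 0) \<and> (\<Sum>a<k. u a) = m}"

lemma weak_compositions_subset: "weak_compositions k m \<subseteq> PiE_dflt {..<k} 0 (\<lambda>_. {..m})"
  by (auto simp: weak_compositions_def PiE_dflt_def not_less intro: member_le_sum[of _ "{..<k}", simplified])

lemma finite_weak_compositions: "finite (weak_compositions k m)"
  by (rule finite_subset[OF weak_compositions_subset]) auto

lemma sum_weak_compositions_Suc:
  "(\<Sum>u\<in>weak_compositions (Suc k) m. f u) =
   (\<Sum>j\<le>m. \<Sum>u\<in>weak_compositions k (m - j). f (u(k := j)))"
proof -
  have sum_upd: "(\<Sum>a<k. (u(k := j)) a) = (\<Sum>a<k. u a)" for u :: "nat \<Rightarrow> nat" and j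
    by (rule sum.cong) auto
  have "(\<Sum>u\<in>weak_compositions (Suc k) m. f u) =
        (\<Sum>(j, u)\<in>(SIGMA j:{..m}. weak_compositions k (m - j)). f (u(k := j)))"
  proof (rule sum.reindex_bij_witness[where i = "\<lambda>(j, u). u(k := j)" and j = "\<lambda>v. (v k, v(k := 0))"])
    fix p assume "p \<in> (SIGMA j:{..m}. weak_compositions k (m - j))"
    then obtain j u where p: "p = (j, u)" "j \<le> m" "u \<in> weak_compositions k (m - j)"
      by auto
    then have "u k = 0" "(\<Sum>a<k. u a) = m - j"
      by (auto simp: weak_compositions_def)
    then show "(\<lambda>v. (v k, v(k := 0))) ((\<lambda>(j, u). u(k := j)) p) = p"
      and "(\<lambda>(j, u). u(k := j)) p \<in> weak_compositions (Suc k) m"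
      using p by (auto simp: weak_compositions_def sum_upd)
  next
    fix v assume v: "v \<in> weak_compositions (Suc k) m"
    then have sum_v: "(\<Sum>a<k. v a) + v k = m"
      by (simp add: weak_compositions_def)
    have "(\<Sum>a<k. (v(k := 0)) a) = (\<Sum>a<k. v a)"
      using sum_upd .
    then show "(\<lambda>v. (v k, v(k := 0))) v \<in> (SIGMA j:{..m}. weak_compositions k (m - j))"
      using v sum_v by (auto simp: weak_compositions_def)
    show "(\<lambda>(j, u). u(k := j)) ((\<lambda>v. (v k, v(k := 0))) v) = v"
      by simp
  qed simp
  then show ?thesis
    by (simp add: sum.Sigma finite_weak_compositions)
qed

theorem multinomial_theorem:
  fixes z :: "nat \<Rightarrow> 'a::field_char_0"
  shows "(\<Sum>a<k. z a) ^ m =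
         (\<Sum>u\<in>weak_compositions k m. fact m / (\<Prod>a<k. fact (u a)) * (\<Prod>a<k. z a ^ u a))"
proof (induction k arbitrary: m)
  case 0
  have "weak_compositions 0 m = (if m = 0 then {\<lambda>_. 0} else {})"
    by (auto simp: weak_compositions_def)
  then show ?case by simp
next
  case (Suc k)
  have "(\<Sum>a<Suc k. z a) ^ m = (\<Sum>j\<le>m. of_nat (m choose j) * z k ^ j * (\<Sum>a<k. z a) ^ (m - j))"
    by (simp add: binomial_ring add.commute)
  also have "\<dots> = (\<Sum>j\<le>m. \<Sum>u\<in>weak_compositions k (m - j).
      fact m / (\<Prod>a<Suc k. fact ((u(k := j)) a)) * (\<Prod>a<Suc k. z a ^ (u(k := j)) a))"
  proof (intro sum.cong refl)
    fix j assume "j \<in> {..m}"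
    then have binom: "of_nat (m choose j) = (fact m / (fact j * fact (m - j)) :: 'a)"
      by (simp add: binomial_fact)
    have coeff: "of_nat (m choose j) * z k ^ j * (fact (m - j) / (\<Prod>a<k. fact (u a)) * Z) =
          fact m / ((\<Prod>a<k. fact (u a)) * fact j) * (Z * z k ^ j)" for u :: "nat \<Rightarrow> nat" and Z
      unfolding binom by (simp add: field_simps)
    show "of_nat (m choose j) * z k ^ j * (\<Sum>a<k. z a) ^ (m - j) =
      (\<Sum>u\<in>weak_compositions k (m - j).
         fact m / (\<Prod>a<Suc k. fact ((u(k := j)) a)) * (\<Prod>a<Suc k. z a ^ (u(k := j)) a))"
      unfolding Suc.IH sum_distrib_left
    proof (intro sum.cong refl)
      fix u :: "nat \<Rightarrow> nat"
      have "(\<Prod>a<Suc k. fact ((u(k := j)) a)) = (\<Prod>a<k. fact (u a)) * (fact j :: 'a)"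
        and "(\<Prod>a<Suc k. z a ^ (u(k := j)) a) = (\<Prod>a<k. z a ^ u a) * z k ^ j"
        by (simp_all add: lessThan_Suc)
      then show "of_nat (m choose j) * z k ^ j * (fact (m - j) / (\<Prod>a<k. fact (u a)) * (\<Prod>a<k. z a ^ u a)) =
        fact m / (\<Prod>a<Suc k. fact ((u(k := j)) a)) * (\<Prod>a<Suc k. z a ^ (u(k := j)) a)"
        by (simp only: coeff)
    qed
  qed
  finally show ?case
    by (simp only: sum_weak_compositions_Suc)
qed

lemma sum_multP_power:
  fixes w :: "nat \<Rightarrow> complex"
  shows "(\<Sum>u\<in>weak_compositions k m. of_real (multP k m u \<alpha>) * (\<Prod>a<k. w a ^ u a)) =
         (\<Sum>a<k. of_real (\<alpha> a) * w a) ^ m"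
  by (simp add: multinomial_theorem multP_def power_mult_distrib prod.distrib mult_ac)

lemma comp_families_eq_PiE_dflt:
  "comp_families q k i = PiE_dflt {..<q} (\<lambda>_. 0) (\<lambda>t. weak_compositions k (i t))"
  by (auto simp: comp_families_def PiE_dflt_def weak_compositions_def fun_eq_iff not_less)

lemma sum_comp_families_multP:
  fixes w :: "nat \<Rightarrow> complex"
  shows "(\<Sum>s\<in>comp_families q k i. \<Prod>t<q. of_real (multP k (i t) (s t) (\<alpha> t)) * (\<Prod>a<k. w a ^ s t a)) =
         (\<Prod>t<q. (\<Sum>a<k. of_real (\<alpha> t a) * w a) ^ i t)"
proof -
  have "(\<Prod>t<q. \<Sum>u\<in>weak_compositions k (i t). of_real (multP k (i t) u (\<alpha> t)) * (\<Prod>a<k. w a ^ u a)) =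
        (\<Sum>s\<in>PiE_dflt {..<q} (\<lambda>_. 0) (\<lambda>t. weak_compositions k (i t)).
           \<Prod>t<q. of_real (multP k (i t) (s t) (\<alpha> t)) * (\<Prod>a<k. w a ^ s t a))"
    by (rule prod_sum_PiE_dflt) (simp_all add: finite_weak_compositions)
  then show ?thesis
    by (simp add: comp_families_eq_PiE_dflt sum_multP_power)
qed

definition cis2pi :: "real \<Rightarrow> complex" where
  "cis2pi x = cis (2 * pi * x)"

lemma cis2pi_add: "cis2pi (x + y) = cis2pi x * cis2pi y"
  by (simp add: cis2pi_def distrib_left cis_mult)

lemma cis2pi_of_nat_mult: "cis2pi (of_nat n * x) = cis2pi x ^ n"
  by (simp add: cis2pi_def Complex.DeMoivre mult.left_commute)

lemma cis2pi_of_int [simp]: "cis2pi (of_int m) = 1"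
  unfolding cis2pi_def by (rule cis_multiple_2pi) simp

lemma cis2pi_0 [simp]: "cis2pi 0 = 1"
  by (simp add: cis2pi_def)

lemma cis2pi_sum: "cis2pi (\<Sum>a\<in>A. f a) = (\<Prod>a\<in>A. cis2pi (f a))"
  by (induction A rule: infinite_finite_induct) (simp_all add: cis2pi_add)

lemma norm_cis2pi [simp]: "norm (cis2pi x) = 1"
  by (simp add: cis2pi_def)

lemma Re_cis2pi: "Re (cis2pi x) = cos (2 * pi * x)"
  by (simp add: cis2pi_def)

lemma cis2pi_eq_1_iff: "cis2pi x = 1 \<longleftrightarrow> x \<in> \<int>"
proof
  assume "cis2pi x = 1"
  then have "cos (2 * pi * x) = 1"
    by (simp add: cis2pi_def complex_eq_iff)
  then obtain n :: int where "2 * pi * x = n * 2 * pi"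
    by (auto simp: cos_one_2pi_int)
  then show "x \<in> \<int>"
    by simp
qed (auto elim: Ints_cases)

lemma sum_cis2pi_multiples:
  fixes m :: int assumes "d > 0"
  shows "(\<Sum>j<d. cis2pi (real j * (of_int m / real d))) = (if int d dvd m then of_nat d else 0)"
proof (cases "int d dvd m")
  case True
  then obtain c where "m = int d * c" ..
  then have "real j * (of_int m / real d) = of_int (int j * c)" for j
    using assms by simp
  then have "(\<Sum>j<d. cis2pi (real j * (of_int m / real d))) = (\<Sum>j<d. 1)"
    by (simp only: cis2pi_of_int)
  then show ?thesis
    using True by simp
next
  case False
  define w where "w = cis2pi (of_int m / real d)"
  have "w \<noteq> 1"
  proof
    assume "w = 1"
    then obtain c where "of_int m / real d = of_int c"
      by (auto simp: w_def cis2pi_eq_1_iff elim: Ints_cases)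
    then have "(of_int m :: real) = of_int (int d * c)"
      using assms by (simp add: field_simps)
    then have "m = int d * c"
      by (simp only: of_int_eq_iff)
    with False show False
      by simp
  qed
  moreover have "w ^ d = 1"
    using assms by (simp add: w_def flip: cis2pi_of_nat_mult)
  ultimately have "(\<Sum>j<d. w ^ j) = 0"
    by (simp add: geometric_sum)
  moreover have "cis2pi (real j * (of_int m / real d)) = w ^ j" for j
    by (simp only: w_def cis2pi_of_nat_mult)
  ultimately show ?thesis
    using False by simp
qed

lemma of_bool_all_cong_eq_sum_cis2pi:
  fixes x y :: "nat \<Rightarrow> int"
  assumes "d > 0"
  shows "of_bool (\<forall>a<K. [x a = y a] (mod int d)) =
         (\<Sum>r\<in>PiE_dflt {..<K} 0 (\<lambda>_. {..<d}). cis2pi ((\<Sum>a<K. real (r a) * of_int (x a - y a)) / real d))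
           / of_nat d ^ K"
proof -
  have "of_bool (\<forall>a<K. [x a = y a] (mod int d)) = (\<Prod>a<K. of_bool (int d dvd x a - y a) :: complex)"
    by (induction K) (auto simp: lessThan_Suc cong_iff_dvd_diff less_Suc_eq)
  also have "\<dots> = (\<Prod>a<K. (\<Sum>j<d. cis2pi (real j * (of_int (x a - y a) / real d))) / of_nat d)"
    by (simp only: sum_cis2pi_multiples[OF assms]) (intro prod.cong refl, use assms in auto)
  also have "\<dots> = (\<Prod>a<K. \<Sum>j<d. cis2pi (real j * (of_int (x a - y a) / real d))) / of_nat d ^ K"
    by (simp add: prod_dividef)
  also have "(\<Prod>a<K. \<Sum>j<d. cis2pi (real j * (of_int (x a - y a) / real d))) =
             (\<Sum>r\<in>PiE_dflt {..<K} 0 (\<lambda>_. {..<d}). \<Prod>a<K. cis2pi (real (r a) * (of_int (x a - y a) / real d)))"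
    by (rule prod_sum_PiE_dflt) auto
  finally show ?thesis
    by (simp add: cis2pi_sum sum_divide_distrib)
qed

lemma cis2pi_pairing:
  fixes s :: "nat \<Rightarrow> nat \<Rightarrow> nat" and g :: "nat \<Rightarrow> int"
  assumes "r K = 0"
  shows "cis2pi ((\<Sum>a<K. real (r a) * of_int (int (\<Sum>t<q. s t a) - g a)) / real d) =
         cis2pi (- (\<Sum>a<K. real (r a) * of_int (g a)) / real d) *
         (\<Prod>t<q. \<Prod>a<Suc K. cis2pi (real (r a) / real d) ^ s t a)"
proof -
  have "(\<Sum>a<K. real (r a) * of_int (int (\<Sum>t<q. s t a) - g a)) =
        (\<Sum>t<q. \<Sum>a<K. real (s t a) * real (r a)) - (\<Sum>a<K. real (r a) * of_int (g a))"
    by (simp add: algebra_simps sum_subtractf sum_distrib_left sum.swap[of _ "{..<q}"])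
  then have "(\<Sum>a<K. real (r a) * of_int (int (\<Sum>t<q. s t a) - g a)) / real d =
        - (\<Sum>a<K. real (r a) * of_int (g a)) / real d + (\<Sum>t<q. \<Sum>a<K. real (s t a) * (real (r a) / real d))"
    by (simp add: diff_divide_distrib sum_divide_distrib)
  then have "cis2pi ((\<Sum>a<K. real (r a) * of_int (int (\<Sum>t<q. s t a) - g a)) / real d) =
      cis2pi (- (\<Sum>a<K. real (r a) * of_int (g a)) / real d) *
      (\<Prod>t<q. \<Prod>a<K. cis2pi (real (r a) / real d) ^ s t a)"
    by (simp only: cis2pi_add cis2pi_sum cis2pi_of_nat_mult)
  then show ?thesis
    using assms by (simp add: lessThan_Suc)
qed

lemma restricted_sum_fourier_expansion:
  fixes \<alpha> :: "nat \<Rightarrow> nat \<Rightarrow> real" and g :: "nat \<Rightarrow> int"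
  assumes "d > 0"
  shows "of_real (\<Sum>s\<in>{s\<in>comp_families q (Suc K) i. \<forall>a<K. [int (\<Sum>t<q. s t a) = g a] (mod int d)}.
                    \<Prod>t<q. multP (Suc K) (i t) (s t) (\<alpha> t)) =
         (\<Sum>r\<in>PiE_dflt {..<K} 0 (\<lambda>_. {..<d}). cis2pi (- (\<Sum>a<K. real (r a) * of_int (g a)) / real d) *
            (\<Prod>t<q. (\<Sum>a<Suc K. of_real (\<alpha> t a) * cis2pi (real (r a) / real d)) ^ i t)) / of_nat d ^ K"
  (is "of_real (\<Sum>s\<in>{s\<in>?F. ?P s}. ?M s) = (\<Sum>r\<in>?R. ?c r * ?\<phi> r) / _")
proof -
  let ?e = "\<lambda>r s. cis2pi ((\<Sum>a<K. real (r a) * of_int (int (\<Sum>t<q. s t a) - g a)) / real d)"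
  have fin: "finite ?F"
    by (simp add: comp_families_eq_PiE_dflt finite_weak_compositions finite_PiE_dflt)
  have "of_real (\<Sum>s\<in>{s\<in>?F. ?P s}. ?M s) = (\<Sum>s\<in>?F. of_real (?M s) * of_bool (?P s))"
    unfolding of_real_sum sum.inter_filter[OF fin] by (intro sum.cong refl) auto
  also have "\<dots> = (\<Sum>s\<in>?F. of_real (?M s) * ((\<Sum>r\<in>?R. ?e r s) / of_nat d ^ K))"
    by (simp add: of_bool_all_cong_eq_sum_cis2pi[OF assms])
  also have "\<dots> = (\<Sum>r\<in>?R. \<Sum>s\<in>?F. of_real (?M s) * ?e r s) / of_nat d ^ K"
    by (simp add: sum_distrib_left sum_divide_distrib sum.swap[of _ ?F])
  also have "\<dots> = (\<Sum>r\<in>?R. ?c r * ?\<phi> r) / of_nat d ^ K"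
  proof (intro arg_cong[where f = "\<lambda>x. x / _"] sum.cong refl)
    fix r assume "r \<in> ?R"
    then have "r K = 0"
      by (simp add: PiE_dflt_def)
    then have "(\<Sum>s\<in>?F. of_real (?M s) * ?e r s) =
        ?c r * (\<Sum>s\<in>?F. \<Prod>t<q. of_real (multP (Suc K) (i t) (s t) (\<alpha> t)) *
                     (\<Prod>a<Suc K. cis2pi (real (r a) / real d) ^ s t a))"
      by (simp only: cis2pi_pairing) (simp add: sum_distrib_left prod.distrib mult_ac)
    then show "(\<Sum>s\<in>?F. of_real (?M s) * ?e r s) = ?c r * ?\<phi> r"
      by (simp only: sum_comp_families_multP)
  qed
  finally show ?thesis .
qed

lemma one_minus_cos_ge_sq:
  fixes y :: real
  assumes "0 \<le> y" "y \<le> pi"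
  shows "y\<^sup>2 / 12 \<le> 1 - cos y"
proof -
  \<comment> \<open>The Taylor bound only covers \<open>[0, 2]\<close>; the half-angle formula extends it to \<open>[0, \<pi>]\<close>.\<close>
  have small: "z\<^sup>2 / 3 \<le> 1 - cos z" if "0 \<le> z" "z \<le> 2" for z :: real
  proof (cases "z = 0")
    case False
    with that have "z > 0" by simp
    from Maclaurin_cos_expansion2[OF this, of 4] obtain t where
      "cos z = (\<Sum>m<4. cos_coeff m * z ^ m) + cos (t + 1/2 * real 4 * pi) / fact 4 * z ^ 4"
      by auto
    moreover have "(\<Sum>m<4. cos_coeff m * z ^ m) = 1 - z\<^sup>2 / 2"
      by (simp add: lessThan_nat_numeral cos_coeff_def fact_numeral)
    moreover have "cos (t + 1/2 * real 4 * pi) / fact 4 * z ^ 4 \<le> z ^ 4 / 24"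
      using mult_right_mono[OF cos_le_one, of "z ^ 4"] by (simp add: fact_numeral)
    moreover have "z ^ 4 \<le> 4 * z\<^sup>2"
    proof -
      have "z\<^sup>2 \<le> 2\<^sup>2"
        using that by (intro power_mono) auto
      then have "z\<^sup>2 * z\<^sup>2 \<le> 4 * z\<^sup>2"
        by (intro mult_right_mono) auto
      then show ?thesis
        by (simp add: power4_eq_xxxx power2_eq_square mult.assoc)
    qed
    ultimately show ?thesis
      by linarith
  qed simp
  define z where "z = y / 2"
  have z: "0 \<le> z" "z \<le> pi / 2"
    using assms by (auto simp: z_def)
  have "1 - cos y = 2 * (1 - cos z) * (1 + cos z)"
    using cos_double_cos[of z] by (simp add: z_def algebra_simps power2_eq_square)
  moreover have "(1 - cos z) * 1 \<le> (1 - cos z) * (2 * (1 + cos z))"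
    using z cos_ge_zero[of z] by (intro mult_left_mono) auto
  moreover have "y\<^sup>2 / 12 = z\<^sup>2 / 3"
    by (simp add: z_def power2_eq_square)
  moreover have "z\<^sup>2 / 3 \<le> 1 - cos z"
    using z pi_half_less_two by (intro small) auto
  ultimately show ?thesis
    by (simp add: algebra_simps)
qed

lemma norm_two_point_le:
  fixes \<alpha> \<beta> :: real and w :: complex
  assumes "0 \<le> \<alpha>" "0 \<le> \<beta>" "\<alpha> + \<beta> \<le> 1" "norm w = 1"
  shows "norm (of_real \<alpha> * w + of_real \<beta>) \<le> \<alpha> + \<beta> - \<alpha> * \<beta> * (1 - Re w)"
proof -
  define p where "p = \<alpha> * \<beta> * (1 - Re w)"
  have Re_le: "\<bar>Re w\<bar> \<le> 1"
    using abs_Re_le_cmod[of w] assms(4) by simp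
  have p_nonneg: "0 \<le> p"
    using assms(1,2) Re_le by (simp add: p_def)
  have "(norm (of_real \<alpha> * w + of_real \<beta>))\<^sup>2 = \<alpha>\<^sup>2 * ((Re w)\<^sup>2 + (Im w)\<^sup>2) + 2 * \<alpha> * \<beta> * Re w + \<beta>\<^sup>2"
    unfolding cmod_power2 by (simp add: algebra_simps power2_eq_square)
  also have "(Re w)\<^sup>2 + (Im w)\<^sup>2 = 1"
    using assms(4) cmod_power2[of w] by simp
  also have "\<alpha>\<^sup>2 * 1 + 2 * \<alpha> * \<beta> * Re w + \<beta>\<^sup>2 = (\<alpha> + \<beta> - p)\<^sup>2 - (2 * p * (1 - \<alpha> - \<beta>) + p\<^sup>2)"
    by (simp add: p_def algebra_simps power2_eq_square)
  also have "\<dots> \<le> (\<alpha> + \<beta> - p)\<^sup>2"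
  proof -
    have "0 \<le> 2 * p * (1 - \<alpha> - \<beta>) + p\<^sup>2"
      using assms(3) p_nonneg by (intro add_nonneg_nonneg mult_nonneg_nonneg) auto
    then show ?thesis
      by linarith
  qed
  finally have "(norm (of_real \<alpha> * w + of_real \<beta>))\<^sup>2 \<le> (\<alpha> + \<beta> - p)\<^sup>2" .
  moreover have "0 \<le> \<alpha> + \<beta> - p"
  proof -
    have "p \<le> \<alpha> * \<beta> * 2"
      using assms(1,2) Re_le unfolding p_def by (intro mult_left_mono) auto
    also have "\<alpha> * \<beta> \<le> \<alpha>" "\<alpha> * \<beta> \<le> \<beta>"
      using assms by (auto intro: mult_right_le_one_le mult_left_le_one_le)
    then have "\<alpha> * \<beta> * 2 \<le> \<alpha> + \<beta>"
      by linarith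
    finally show ?thesis
      by linarith
  qed
  ultimately have "norm (of_real \<alpha> * w + of_real \<beta>) \<le> \<alpha> + \<beta> - p"
    by (rule power2_le_imp_le)
  then show ?thesis
    by (simp add: p_def)
qed

lemma norm_convex_comb_unimodular_le:
  fixes \<alpha> :: "'a \<Rightarrow> real" and w :: "'a \<Rightarrow> complex"
  assumes "finite B" "a \<in> B" "b \<in> B" "a \<noteq> b"
    and nonneg: "\<And>x. x \<in> B \<Longrightarrow> 0 \<le> \<alpha> x" and sum_one: "(\<Sum>x\<in>B. \<alpha> x) = 1"
    and unimodular: "\<And>x. x \<in> B \<Longrightarrow> norm (w x) = 1" and "w b = 1"
    and "0 \<le> m" "m \<le> \<alpha> a" "m \<le> \<alpha> b"
  shows "norm (\<Sum>x\<in>B. of_real (\<alpha> x) * w x) \<le> 1 - m\<^sup>2 * (1 - Re (w a))"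
proof -
  define B' where "B' = B - {a, b}"
  have split: "sum f B = f a + f b + sum f B'" for f :: "'a \<Rightarrow> 'z::comm_monoid_add"
    using assms(1-4) sum.remove[of B a f] sum.remove[of "B - {a}" b f]
    by (simp add: B'_def Diff_insert2[symmetric] add.assoc)
  have rest: "norm (\<Sum>x\<in>B'. of_real (\<alpha> x) * w x) \<le> (\<Sum>x\<in>B'. \<alpha> x)"
    using norm_sum[of "\<lambda>x. of_real (\<alpha> x) * w x" B']
    by (simp add: B'_def norm_mult nonneg unimodular)
  have rest_nonneg: "0 \<le> (\<Sum>x\<in>B'. \<alpha> x)"
    by (intro sum_nonneg) (simp add: B'_def nonneg)
  have two: "norm (of_real (\<alpha> a) * w a + of_real (\<alpha> b)) \<le> \<alpha> a + \<alpha> b - \<alpha> a * \<alpha> b * (1 - Re (w a))"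
    using assms rest_nonneg split[of \<alpha>] by (intro norm_two_point_le) auto
  have "m\<^sup>2 * (1 - Re (w a)) \<le> \<alpha> a * \<alpha> b * (1 - Re (w a))"
  proof (rule mult_right_mono)
    show "m\<^sup>2 \<le> \<alpha> a * \<alpha> b"
      using assms by (simp add: power2_eq_square mult_mono)
    show "0 \<le> 1 - Re (w a)"
      using complex_Re_le_cmod[of "w a"] unimodular assms(2) by auto
  qed
  moreover have "norm (\<Sum>x\<in>B. of_real (\<alpha> x) * w x) \<le>
      norm (of_real (\<alpha> a) * w a + of_real (\<alpha> b)) + norm (\<Sum>x\<in>B'. of_real (\<alpha> x) * w x)"
    using split[of "\<lambda>x. of_real (\<alpha> x) * w x"] \<open>w b = 1\<close> norm_triangle_ineq by simp
  ultimately show ?thesis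
    using two rest split[of \<alpha>] sum_one by linarith
qed

lemma norm_char_le:
  fixes \<alpha> :: "nat \<Rightarrow> real" and x :: "nat \<Rightarrow> real"
  assumes "K > 0" and "0 \<le> m" and "\<And>a. a < Suc K \<Longrightarrow> m \<le> \<alpha> a" and "(\<Sum>a<Suc K. \<alpha> a) = 1"
    and "x K = 0"
  shows "norm (\<Sum>a<Suc K. of_real (\<alpha> a) * cis2pi (x a)) \<le>
         1 - m\<^sup>2 / real K * (\<Sum>a<K. 1 - cos (2 * pi * x a))"
proof -
  let ?\<phi> = "\<Sum>a<Suc K. of_real (\<alpha> a) * cis2pi (x a)"
  \<comment> \<open>Pair each coordinate \<open>a < K\<close> with the coordinate \<open>K\<close>, where the character is trivial\<close>
  have "norm ?\<phi> \<le> 1 - m\<^sup>2 * (1 - cos (2 * pi * x a))" if "a < K" for a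
    using norm_convex_comb_unimodular_le[of "{..<Suc K}" a K \<alpha> "\<lambda>a. cis2pi (x a)" m] assms that
    by (force simp: Re_cis2pi intro: order_trans[OF \<open>0 \<le> m\<close>])
  then have "(\<Sum>a<K. norm ?\<phi>) \<le> (\<Sum>a<K. 1 - m\<^sup>2 * (1 - cos (2 * pi * x a)))"
    by (intro sum_mono) simp
  moreover have "(\<Sum>a<K. 1 - m\<^sup>2 * (1 - cos (2 * pi * x a))) =
      real K - m\<^sup>2 * (\<Sum>a<K. 1 - cos (2 * pi * x a))"
    by (simp add: sum_subtractf flip: sum_distrib_left)
  ultimately have "real K * norm ?\<phi> \<le> real K - m\<^sup>2 * (\<Sum>a<K. 1 - cos (2 * pi * x a))"
    by simp
  then show ?thesis
    using assms(1) by (simp add: field_simps)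
qed

lemma sum_exp_neg_geometric_le:
  fixes \<mu> :: real
  assumes "\<mu> > 0"
  shows "(\<Sum>j\<in>{1..<d}. exp (- \<mu>) ^ j) \<le> 1 / \<mu>"
proof -
  define Q where "Q = exp (- \<mu>)"
  have Q: "0 < Q" "Q < 1"
    using assms by (auto simp: Q_def)
  have "(\<Sum>j\<in>{1..<d}. Q ^ j) \<le> Q / (1 - Q)"
  proof (cases "d = 0")
    case False
    have "(\<Sum>j\<in>{1..<d}. Q ^ j) = (\<Sum>j<d. Q ^ j) - 1"
      using False by (simp add: lessThan_atLeast0 sum.atLeast_Suc_lessThan)
    also have "\<dots> = (1 - Q ^ d) / (1 - Q) - 1"
      using Q by (simp add: geometric_sum field_simps)
    also have "\<dots> \<le> 1 / (1 - Q) - 1"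
      using Q by (intro diff_right_mono divide_right_mono) auto
    finally show ?thesis
      using Q by (simp add: field_simps)
  qed (use Q in simp)
  also have "Q / (1 - Q) = 1 / (exp \<mu> - 1)"
    using Q by (simp add: Q_def field_simps exp_minus)
  also have "\<dots> \<le> 1 / \<mu>"
  proof -
    have "\<mu> \<le> exp \<mu> - 1"
      using exp_ge_add_one_self[of \<mu>] by linarith
    then show ?thesis
      using assms by (intro divide_left_mono) auto
  qed
  finally show ?thesis
    by (simp add: Q_def)
qed

lemma sq_le_one_minus_cos_2pi:
  fixes \<theta> :: real
  assumes "0 \<le> \<theta>" "\<theta> \<le> 1 / 2"
  shows "\<theta>\<^sup>2 \<le> 1 - cos (2 * pi * \<theta>)"
proof -
  have "(2 * pi * \<theta>)\<^sup>2 / 12 \<le> 1 - cos (2 * pi * \<theta>)"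
    using assms by (intro one_minus_cos_ge_sq) auto
  moreover have "\<theta>\<^sup>2 \<le> (2 * pi * \<theta>)\<^sup>2 / 12"
  proof -
    have "2\<^sup>2 \<le> pi\<^sup>2"
      using pi_ge_two by (intro power_mono) auto
    then have "1 * \<theta>\<^sup>2 \<le> (pi\<^sup>2 / 3) * \<theta>\<^sup>2"
      by (intro mult_right_mono) auto
    then show ?thesis
      by (simp add: power_mult_distrib)
  qed
  ultimately show ?thesis
    by linarith
qed

lemma exp_neg_one_minus_cos_le_geometric:
  fixes c :: real
  assumes "d > 0" and "c > 0" and "2 * j \<le> d"
  shows "exp (- c * (1 - cos (2 * pi * (real j / real d)))) \<le> exp (1/4) * exp (- sqrt c / real d) ^ j"
proof -
  define \<mu> where "\<mu> = sqrt c / real d"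
  have "(\<mu> * real j)\<^sup>2 = c * (real j / real d)\<^sup>2"
    using assms by (simp add: \<mu>_def power2_eq_square)
  also have "\<dots> \<le> c * (1 - cos (2 * pi * (real j / real d)))"
    using assms by (intro mult_left_mono sq_le_one_minus_cos_2pi) (auto simp: field_simps)
  finally have "exp (- c * (1 - cos (2 * pi * (real j / real d)))) \<le> exp (- (\<mu> * real j)\<^sup>2)"
    by simp
  also have "\<dots> \<le> exp (1/4 - \<mu> * real j)"
    using zero_le_power2[of "\<mu> * real j - 1/2"] by (simp add: algebra_simps power2_eq_square)
  also have "1/4 - \<mu> * real j = 1/4 + real j * (- \<mu>)"
    by simp
  also have "exp \<dots> = exp (1/4) * exp (- \<mu>) ^ j"
    by (simp only: exp_add exp_of_nat_mult)
  finally show ?thesis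
    by (simp add: \<mu>_def)
qed

lemma exp_neg_one_minus_cos_le_two_geometric:
  fixes c :: real
  assumes "d > 0" and "c > 0" and "j \<le> d"
  shows "exp (- c * (1 - cos (2 * pi * (real j / real d)))) \<le>
         exp (1/4) * (exp (- sqrt c / real d) ^ j + exp (- sqrt c / real d) ^ (d - j))"
proof (cases "2 * j \<le> d")
  case True
  then show ?thesis
    using exp_neg_one_minus_cos_le_geometric[OF assms(1,2) True]
    by (smt (verit) exp_gt_zero zero_le_power mult_left_mono)
next
  case False
  have "cos (2 * pi * (real (d - j) / real d)) = cos (2 * pi - 2 * pi * (real j / real d))"
    using assms by (simp add: of_nat_diff field_simps)
  then have "exp (- c * (1 - cos (2 * pi * (real j / real d)))) =
             exp (- c * (1 - cos (2 * pi * (real (d - j) / real d))))"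
    by simp
  also have "\<dots> \<le> exp (1/4) * exp (- sqrt c / real d) ^ (d - j)"
    using False by (intro exp_neg_one_minus_cos_le_geometric[OF assms(1,2)]) simp
  finally show ?thesis
    by (smt (verit) exp_gt_zero zero_le_power mult_left_mono)
qed

lemma sum_exp_neg_one_minus_cos_le:
  fixes c :: real
  assumes "d > 0" "c > 0"
  shows "(\<Sum>j<d. exp (- c * (1 - cos (2 * pi * (real j / real d))))) \<le> 1 + 2 * exp (1/4) * real d / sqrt c"
proof -
  define h where "h j = exp (- c * (1 - cos (2 * pi * (real j / real d))))" for j
  define Q where "Q = exp (- sqrt c / real d)"
  have "(\<Sum>j\<in>{1..<d}. h j) \<le> (\<Sum>j\<in>{1..<d}. exp (1/4) * (Q ^ j + Q ^ (d - j)))"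
    unfolding h_def Q_def using assms by (intro sum_mono exp_neg_one_minus_cos_le_two_geometric) auto
  also have "\<dots> = exp (1/4) * ((\<Sum>j\<in>{1..<d}. Q ^ j) + (\<Sum>j\<in>{1..<d}. Q ^ (d - j)))"
    by (simp add: sum.distrib flip: sum_distrib_left)
  also have "(\<Sum>j\<in>{1..<d}. Q ^ (d - j)) = (\<Sum>j\<in>{1..<d}. Q ^ j)"
    by (rule sum.reindex_bij_witness[of _ "\<lambda>j. d - j" "\<lambda>j. d - j"]) auto
  also have "exp (1/4) * ((\<Sum>j\<in>{1..<d}. Q ^ j) + (\<Sum>j\<in>{1..<d}. Q ^ j)) \<le> exp (1/4) * (2 / (sqrt c / real d))"
    using sum_exp_neg_geometric_le[of "sqrt c / real d" d] assms unfolding Q_def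
    by (intro mult_left_mono) auto
  finally have "(\<Sum>j\<in>{1..<d}. h j) \<le> 2 * exp (1/4) * real d / sqrt c"
    by (simp add: mult_ac)
  moreover have "(\<Sum>j<d. h j) = 1 + (\<Sum>j\<in>{1..<d}. h j)"
    using assms by (simp add: h_def lessThan_atLeast0 sum.atLeast_Suc_lessThan)
  ultimately show ?thesis
    by (simp add: h_def)
qed

lemma sum_PiE_dflt_nonzero_prod_le:
  fixes h :: "nat \<Rightarrow> real"
  assumes "d > 0" and h: "\<And>j. 0 \<le> h j" "\<And>j. h j \<le> 1" "h 0 = 1"
  shows "(\<Sum>r\<in>PiE_dflt {..<K} 0 (\<lambda>_. {..<d}) - {\<lambda>_. 0}. \<Prod>a<K. h (r a)) / real d ^ K \<le>
         real K * ((\<Sum>j<d. h j) / real d - 1 / real d)"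
proof -
  let ?R = "PiE_dflt {..<K} 0 (\<lambda>_. {..<d})"
  define H where "H = (\<Sum>j<d. h j) / real d"
  have "(\<Sum>r\<in>?R. \<Prod>a<K. h (r a)) = (\<Sum>j<d. h j) ^ K"
    using prod_sum_PiE_dflt[of "{..<K}" "\<lambda>_. {..<d}" "\<lambda>_. h" 0] by simp
  moreover have "finite ?R"
    by (rule finite_PiE_dflt) auto
  moreover have "(\<lambda>_. 0) \<in> ?R"
    using assms(1) by (simp add: PiE_dflt_def)
  ultimately have "(\<Sum>r\<in>?R - {\<lambda>_. 0}. \<Prod>a<K. h (r a)) = (\<Sum>j<d. h j) ^ K - 1"
    using sum.remove[of ?R "\<lambda>_. 0" "\<lambda>r. \<Prod>a<K. h (r a)"] h(3) by simp
  then have "(\<Sum>r\<in>?R - {\<lambda>_. 0}. \<Prod>a<K. h (r a)) / real d ^ K = H ^ K - (1 / real d) ^ K"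
    using assms(1) by (simp add: H_def power_divide diff_divide_distrib)
  also have "\<dots> \<le> real K * \<bar>H - 1 / real d\<bar>"
  proof -
    have "1 \<le> (\<Sum>j<d. h j)"
      using member_le_sum[of 0 "{..<d}" h] h assms(1) by simp
    moreover have "(\<Sum>j<d. h j) \<le> real d"
      using sum_bounded_above[of "{..<d}" h 1] h(2) by simp
    ultimately have "\<bar>H\<bar> \<le> 1" "\<bar>1 / real d\<bar> \<le> 1"
      using assms(1) by (simp_all add: H_def)
    then show ?thesis
      using norm_power_diff[of H "1 / real d" K] by simp
  qed
  also have "\<dots> = real K * (H - 1 / real d)"
    using member_le_sum[of 0 "{..<d}" h] h assms(1) by (simp add: H_def divide_right_mono)
  finally show ?thesis
    by (simp add: H_def)
qed

lemma sum_nonzero_freqs_exp_cos_le: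
  fixes \<gamma> :: real
  assumes "d > 0" and "\<gamma> > 0"
  shows "(\<Sum>r\<in>PiE_dflt {..<K} 0 (\<lambda>_. {..<d}) - {\<lambda>_. 0}.
            \<Prod>a<K. exp (- \<gamma> * (1 - cos (2 * pi * (real (r a) / real d))))) / real d ^ K
         \<le> real K * (2 * exp (1/4) / sqrt \<gamma>)"
proof -
  define h where "h j = exp (- \<gamma> * (1 - cos (2 * pi * (real j / real d))))" for j
  have "h j \<le> 1" for j
    using \<open>\<gamma> > 0\<close> cos_le_one[of "2 * pi * (real j / real d)"] by (simp add: h_def)
  then have "(\<Sum>r\<in>PiE_dflt {..<K} 0 (\<lambda>_. {..<d}) - {\<lambda>_. 0}. \<Prod>a<K. h (r a)) / real d ^ K \<le>
      real K * ((\<Sum>j<d. h j) / real d - 1 / real d)"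
    using \<open>d > 0\<close> by (intro sum_PiE_dflt_nonzero_prod_le) (simp_all add: h_def)
  also have "\<dots> \<le> real K * (2 * exp (1/4) / sqrt \<gamma>)"
  proof -
    have "(\<Sum>j<d. h j) / real d \<le> (1 + 2 * exp (1/4) * real d / sqrt \<gamma>) / real d"
      using sum_exp_neg_one_minus_cos_le[OF assms] \<open>d > 0\<close>
      by (intro divide_right_mono) (simp_all add: h_def)
    also have "\<dots> = 1 / real d + 2 * exp (1/4) / sqrt \<gamma>"
      using \<open>d > 0\<close> by (simp add: field_simps)
    finally show ?thesis
      by (intro mult_left_mono) simp_all
  qed
  finally show ?thesis
    by (simp add: h_def)
qed

lemma norm_prod_char_power_le:
  fixes \<alpha> :: "nat \<Rightarrow> nat \<Rightarrow> real" and x :: "nat \<Rightarrow> real"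
  assumes "K > 0" "0 \<le> m" "\<And>t a. t < q \<Longrightarrow> a < Suc K \<Longrightarrow> m \<le> \<alpha> t a"
    and "\<And>t. t < q \<Longrightarrow> (\<Sum>a<Suc K. \<alpha> t a) = 1" and "x K = 0"
  shows "norm (\<Prod>t<q. (\<Sum>a<Suc K. of_real (\<alpha> t a) * cis2pi (x a)) ^ i t) \<le>
         (\<Prod>a<K. exp (- (m\<^sup>2 / real K * (\<Sum>t<q. i t)) * (1 - cos (2 * pi * x a))))"
proof -
  define G where "G = (\<Sum>a<K. 1 - cos (2 * pi * x a))"
  have "norm (\<Sum>a<Suc K. of_real (\<alpha> t a) * cis2pi (x a)) \<le> exp (- (m\<^sup>2 / real K) * G)" if "t < q" for t
  proof -
    have "norm (\<Sum>a<Suc K. of_real (\<alpha> t a) * cis2pi (x a)) \<le> 1 + (- (m\<^sup>2 / real K) * G)"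
      using norm_char_le[of K m "\<alpha> t" x] assms that by (simp add: G_def)
    also have "\<dots> \<le> exp (- (m\<^sup>2 / real K) * G)"
      by (rule exp_ge_add_one_self)
    finally show ?thesis .
  qed
  then have "norm (\<Prod>t<q. (\<Sum>a<Suc K. of_real (\<alpha> t a) * cis2pi (x a)) ^ i t) \<le>
      (\<Prod>t<q. exp (- (m\<^sup>2 / real K) * G) ^ i t)"
    unfolding prod_norm[symmetric] norm_power by (intro prod_mono conjI power_mono) auto
  also have "\<dots> = exp (\<Sum>t<q. real (i t) * (- (m\<^sup>2 / real K) * G))"
    by (simp add: exp_sum flip: exp_of_nat_mult)
  also have "\<dots> = exp ((\<Sum>t<q. real (i t)) * (- (m\<^sup>2 / real K) * G))"
    by (simp only: sum_distrib_right)
  also have "\<dots> = (\<Prod>a<K. exp (- (m\<^sup>2 / real K * (\<Sum>t<q. i t)) * (1 - cos (2 * pi * x a))))"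
    unfolding exp_sum[symmetric, OF finite_lessThan] G_def sum_distrib_left
    by (rule arg_cong[where f = exp], rule sum.cong) simp_all
  finally show ?thesis .
qed

lemma restricted_sum_minus_main_term:
  fixes \<alpha> :: "nat \<Rightarrow> nat \<Rightarrow> real" and g :: "nat \<Rightarrow> int"
  assumes "d > 0" and "\<And>t. t < q \<Longrightarrow> (\<Sum>a<Suc K. \<alpha> t a) = 1"
  shows "of_real ((\<Sum>s\<in>{s\<in>comp_families q (Suc K) i. \<forall>a<K. [int (\<Sum>t<q. s t a) = g a] (mod int d)}.
                    \<Prod>t<q. multP (Suc K) (i t) (s t) (\<alpha> t)) - 1 / real d ^ K) =
         (\<Sum>r\<in>PiE_dflt {..<K} 0 (\<lambda>_. {..<d}) - {\<lambda>_. 0}. cis2pi (- (\<Sum>a<K. real (r a) * of_int (g a)) / real d) *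
            (\<Prod>t<q. (\<Sum>a<Suc K. of_real (\<alpha> t a) * cis2pi (real (r a) / real d)) ^ i t)) / of_nat d ^ K"
  (is "of_real (?P - _) = (\<Sum>r\<in>?R - _. ?T r) / _")
proof -
  have "finite ?R"
    by (rule finite_PiE_dflt) auto
  moreover have "(\<lambda>_. 0) \<in> ?R"
    using \<open>d > 0\<close> by (simp add: PiE_dflt_def)
  ultimately have "sum ?T ?R = ?T (\<lambda>_. 0) + (\<Sum>r\<in>?R - {\<lambda>_. 0}. ?T r)"
    by (rule sum.remove)
  moreover have "(\<Sum>a<Suc K. of_real (\<alpha> t a)) = (1 :: complex)" if "t < q" for t
    by (simp only: of_real_sum[symmetric] assms(2)[OF that] of_real_1)
  then have "?T (\<lambda>_. 0) = 1"
    by simp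
  moreover have "of_real ?P = sum ?T ?R / of_nat d ^ K"
    by (rule restricted_sum_fourier_expansion[OF \<open>d > 0\<close>])
  ultimately show ?thesis
    by (simp add: add_divide_distrib)
qed

lemma restricted_sum_error_le:
  fixes \<alpha> :: "nat \<Rightarrow> nat \<Rightarrow> real" and g :: "nat \<Rightarrow> int" and i :: "nat \<Rightarrow> nat"
  assumes "K > 0" and "m > 0" and "\<And>t a. t < q \<Longrightarrow> a < Suc K \<Longrightarrow> m \<le> \<alpha> t a"
    and sum_one: "\<And>t. t < q \<Longrightarrow> (\<Sum>a<Suc K. \<alpha> t a) = 1"
    and "d > 0" and "n > 0" and "(\<Sum>t<q. i t) = n"
  shows "\<bar>(\<Sum>s\<in>{s\<in>comp_families q (Suc K) i. \<forall>a<K. [int (\<Sum>t<q. s t a) = g a] (mod int d)}.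
              \<Prod>t<q. multP (Suc K) (i t) (s t) (\<alpha> t)) - 1 / real d ^ K\<bar>
         \<le> 2 * exp (1/4) * real K * sqrt (real K) / (m * sqrt (real n))"
  (is "\<bar>?P - _\<bar> \<le> _")
proof -
  define \<gamma> where "\<gamma> = m\<^sup>2 / real K * real n"
  define h where "h j = exp (- \<gamma> * (1 - cos (2 * pi * (real j / real d))))" for j
  define R where "R = PiE_dflt {..<K} 0 (\<lambda>_. {..<d})"
  define T where "T r = cis2pi (- (\<Sum>a<K. real (r a) * of_int (g a)) / real d) *
      (\<Prod>t<q. (\<Sum>a<Suc K. of_real (\<alpha> t a) * cis2pi (real (r a) / real d)) ^ i t)" for r
  have "\<gamma> > 0"
    using assms by (simp add: \<gamma>_def)
  have "of_real (?P - 1 / real d ^ K) = (\<Sum>r\<in>R - {\<lambda>_. 0}. T r) / of_nat d ^ K"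
    unfolding R_def T_def using \<open>d > 0\<close> sum_one by (rule restricted_sum_minus_main_term)
  then have "norm (of_real (?P - 1 / real d ^ K) :: complex) = norm ((\<Sum>r\<in>R - {\<lambda>_. 0}. T r) / of_nat d ^ K)"
    by (rule arg_cong[where f = norm])
  then have "\<bar>?P - 1 / real d ^ K\<bar> = norm ((\<Sum>r\<in>R - {\<lambda>_. 0}. T r) / of_nat d ^ K)"
    by (simp only: norm_of_real)
  also have "\<dots> = norm (\<Sum>r\<in>R - {\<lambda>_. 0}. T r) / real d ^ K"
    by (simp add: norm_divide norm_power)
  also have "\<dots> \<le> (\<Sum>r\<in>R - {\<lambda>_. 0}. \<Prod>a<K. h (r a)) / real d ^ K"
  proof (intro divide_right_mono order_trans[OF norm_sum] sum_mono)
    fix r assume "r \<in> R - {\<lambda>_. 0}"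
    then have "r K = 0"
      by (simp add: R_def PiE_dflt_def)
    have "norm (T r) = norm (\<Prod>t<q. (\<Sum>a<Suc K. of_real (\<alpha> t a) * cis2pi (real (r a) / real d)) ^ i t)"
      by (simp add: T_def norm_mult)
    also have "\<dots> \<le> (\<Prod>a<K. exp (- (m\<^sup>2 / real K * (\<Sum>t<q. i t)) * (1 - cos (2 * pi * (real (r a) / real d)))))"
      using assms \<open>r K = 0\<close> by (intro norm_prod_char_power_le) auto
    also have "\<dots> = (\<Prod>a<K. h (r a))"
      using assms by (simp add: h_def \<gamma>_def)
    finally show "norm (T r) \<le> (\<Prod>a<K. h (r a))" .
  qed simp
  also have "\<dots> \<le> real K * (2 * exp (1/4) / sqrt \<gamma>)"
    unfolding R_def h_def using \<open>d > 0\<close> \<open>\<gamma> > 0\<close> by (rule sum_nonzero_freqs_exp_cos_le)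
  also have "sqrt \<gamma> = m * sqrt (real n) / sqrt (real K)"
    using \<open>m > 0\<close> by (simp add: \<gamma>_def real_sqrt_mult real_sqrt_divide)
  also have "real K * (2 * exp (1/4) / (m * sqrt (real n) / sqrt (real K))) =
      2 * exp (1/4) * real K * sqrt (real K) / (m * sqrt (real n))"
    by simp
  finally show ?thesis .
qed

lemma finite_pos_lower_bound:
  fixes f :: "'a \<Rightarrow> real"
  assumes "finite A" and "\<And>x. x \<in> A \<Longrightarrow> 0 < f x"
  shows "\<exists>m>0. \<forall>x\<in>A. m \<le> f x"
proof (cases "A = {}")
  case False
  then show ?thesis
    using assms by (intro exI[of _ "Min (f ` A)"]) auto
qed (intro exI[of _ 1], simp)

lemma le_mult_ln_divide_sqrt:
  fixes C :: real and n :: nat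
  assumes "C \<ge> 0" and "n \<ge> 3"
  shows "C / sqrt (real n) \<le> C * ln (real n) / sqrt (real n)"
proof -
  have "exp 1 \<le> real n"
    using exp_le assms(2) by linarith
  then have "1 \<le> ln (real n)"
    using assms(2) by (simp add: ln_ge_iff)
  then show ?thesis
    using assms(1) mult_left_mono[of 1 "ln (real n)" C] by (intro divide_right_mono) auto
qed

theorem lemma2p4:
  fixes q k :: nat and \<alpha> :: "nat \<Rightarrow> nat \<Rightarrow> real"
  assumes "q \<ge> 1" and "k \<ge> 2"
    and "\<And>t a. t < q \<Longrightarrow> a < k \<Longrightarrow> 0 < \<alpha> t a \<and> \<alpha> t a < 1"
    and "\<And>t. t < q \<Longrightarrow> (\<Sum>a<k. \<alpha> t a) = 1"
  shows "\<exists>C::real. \<exists>N::nat. \<forall>n d. \<forall>g :: nat \<Rightarrow> int. \<forall>i :: nat \<Rightarrow> nat.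
           n \<ge> N \<longrightarrow> d \<ge> 1 \<longrightarrow> (\<forall>t<q. i t \<le> n) \<longrightarrow> (\<Sum>t<q. i t) = n \<longrightarrow>
           \<bar>(\<Sum>s \<in> {s \<in> comp_families q k i.
                      \<forall>a<k-1. [int (\<Sum>t<q. s t a) = g a] (mod int d)}.
               \<Prod>t<q. multP k (i t) (s t) (\<alpha> t))
            - 1 / real d ^ (k - 1)\<bar> \<le> C * ln (real n) / sqrt (real n)"
proof -
  obtain K where k: "k = Suc K" and "K > 0"
    using assms(2) by (metis Suc_le_D less_Suc_eq_0_disj not_less_eq_eq numeral_2_eq_2)
  have "\<exists>m>0. \<forall>x\<in>{..<q} \<times> {..<k}. m \<le> (\<lambda>(t, a). \<alpha> t a) x"
    using assms(3) by (intro finite_pos_lower_bound) auto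
  then obtain m where "m > 0" and m_le: "\<And>t a. t < q \<Longrightarrow> a < k \<Longrightarrow> m \<le> \<alpha> t a"
    by auto
  define C where "C = 2 * exp (1/4) * real K * sqrt (real K) / m"
  show ?thesis
  proof (intro exI[of _ C] exI[of _ 3] allI impI)
    fix n d :: nat and g :: "nat \<Rightarrow> int" and i :: "nat \<Rightarrow> nat"
    assume "3 \<le> n" "1 \<le> d" "\<forall>t<q. i t \<le> n" "(\<Sum>t<q. i t) = n"
    then have "\<bar>(\<Sum>s \<in> {s \<in> comp_families q k i. \<forall>a<k-1. [int (\<Sum>t<q. s t a) = g a] (mod int d)}.
               \<Prod>t<q. multP k (i t) (s t) (\<alpha> t)) - 1 / real d ^ (k - 1)\<bar> \<le> C / sqrt (real n)"
      (is "?err \<le> _")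
      using restricted_sum_error_le[of K m q \<alpha> d n i g] \<open>K > 0\<close> \<open>m > 0\<close> m_le assms(4)
      by (simp add: k C_def)
    also have "\<dots> \<le> C * ln (real n) / sqrt (real n)"
      using \<open>m > 0\<close> \<open>3 \<le> n\<close> by (intro le_mult_ln_divide_sqrt) (simp_all add: C_def)
    finally show "?err \<le> C * ln (real n) / sqrt (real n)" .
  qed
qed

end
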